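(* Let $N\ge 1$ and let $X_1,\dots,X_N$ be the $N$ roots of the $N$-th Legendre polynomial, transformed to the interval $[0,1]$. For $i=1,\dots,N$ let $h_i(\xi)=\prod_{s\ne i}\frac{\xi-X_s}{X_i-X_s}$ be the Lagrange basis polynomials, so that $h_1,\dots,h_N$ form a basis of the space $\mathsf{P}_{N-1}$ of real polynomials of degree at most $N-1$. Let $m\ge 1$, let $s_1,\dots,s_m>0$ with $\sum_{k=1}^m s_k=1$, and set $o_k=\sum_{\alpha=1}^{k-1}s_\alpha$ (so $o_1=0$); thus the cell face parameter interval $[0,1]$ (coordinate $\xi$) is partitioned into the mortar intervals $[o_k,o_k+s_k]$, and on the $k$-th mortar the mortar coordinate $z\in[0,1]$ is related to $\xi$ by $\xi=o_k+s_k z$. Given any $\phi^{\Omega}\in\mathsf{P}_{N-1}$ (a function of $\xi$), define for each $k$ the polynomial $\phi^{\Xi_k}\in\mathsf{P}_{N-1}$ (a function of $z$) as the unique solution of $$\int_0^1\big(\phi^{\Xi_k}(z)-\phi^{\Omega}(o_k+s_kz)\big)h_j(z)\,dz=0\quad\text{for all }j=1,\dots,N,$$ and then define $\phi^{*\Omega}\in\mathsf{P}_{N-1}$ as the unique solution of $$\sum_{k=1}^m\int_{o_k}^{o_k+s_k}\Big(\phi^{*\Omega}(\xi)-\phi^{\Xi_k}\big(\tfrac{\xi-o_k}{s_k}\big)\Big)h_j(\xi)\,d\xi=0\quad\text{for all }j=1,\dots,N.$$ Then $\phi^{*\Omega}=\phi^{\Omega}$. Equivalently, writing $\mathbf{P}^{\Omega\to\Xi_k}$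 for the $N\times N$ matrix mapping the nodal values $(\phi^{\Omega}(X_1),\dots,\phi^{\Omega}(X_N))$ to $(\phi^{\Xi_k}(X_1),\dots,\phi^{\Xi_k}(X_N))$, and $\mathbf{P}^{\Xi_k\to\Omega}$ for the $N\times N$ matrix such that the nodal values of $\phi^{*\Omega}$ equal $\sum_{k=1}^m\mathbf{P}^{\Xi_k\to\Omega}$ applied to the nodal values of $\phi^{\Xi_k}$, one has $\sum_{k=1}^m\mathbf{P}^{\Xi_k\to\Omega}\mathbf{P}^{\Omega\to\Xi_k}=\mathbf{I}$ (the $N\times N$ identity matrix).
   Context: This is the "outflow condition" for projections between a cell face $\Omega$ on a nonconforming (sliding) interface and the mortar elements $\Xi_1,\dots,\Xi_m$ that subdivide it: projecting a polynomial from a cell face to its mortars and immediately projecting back reproduces the original polynomial. The matrices $\mathbf{P}^{\Xi_k\to\Omega}$ are well defined by linearity: the back-projection is linear in the tuple of mortar polynomials and decomposes as a sum of contributions from each mortar, with $\mathbf{P}^{\Xi_k\to\Omega}$ being the contribution of mortar $k$ (explicitly $\mathbf{P}^{\Xi_k\to\Omega}=s_k\mathbf{M}^{-1}\mathbf{S}_k^{\mathsf T}$ and $\mathbf{P}^{\Omega\to\Xi_k}=\mathbf{M}^{-1}\mathbf{S}_k$, where $M_{ji}=\int_0^1h_i(z)h_j(z)\,dz$ and $(\mathbf{S}_k)_{ji}=\int_0^1h_i(o_k+s_kz)h_j(z)\,dz$). *)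

theory Defs
  imports "HOL-Analysis.Analysis" "HOL-Computational_Algebra.Polynomial"
begin

text \<open>Legendre polynomial on [-1,1] via Rodrigues' formula.\<close>
definition legendre_poly :: "nat \<Rightarrow> real poly" where
  "legendre_poly n = smult (1 / (2 ^ n * fact n)) ((pderiv ^^ n) ([:-1, 0, 1:] ^ n))"

definition lagrange_basis :: "(nat \<Rightarrow> real) \<Rightarrow> nat \<Rightarrow> nat \<Rightarrow> real poly" where
  "lagrange_basis X N i =
     (\<Prod>s\<in>{1..N} - {i}. smult (1 / (X i - X s)) [:- X s, 1:])"

definition mortar_offset :: "(nat \<Rightarrow> real) \<Rightarrow> nat \<Rightarrow> real" where
  "mortar_offset s k = (\<Sum>\<alpha>\<in>{1..<k}. s \<alpha>)"

end

theory Submission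
  imports Defs
begin

text \<open>
  Both projections are \<open>L\<^sup>2\<close>-orthogonal projections onto the polynomials of degree \<open>< N\<close>,
  which the Lagrange basis spans for any distinct nodes. The pullback of \<open>\<phi>\<^sup>\<Omega>\<close> to a mortar has degree \<open>< N\<close>, so the forward projection
  reproduces it exactly; since the mortar intervals tile \<open>[0,1]\<close>, the back projection is then
  the projection of \<open>\<phi>\<^sup>\<Omega>\<close> onto its own space.
\<close>

lemma poly_lagrange_basis_node:
  assumes "inj_on X {1..N}" "i \<in> {1..N}" "j \<in> {1..N}"
  shows "poly (lagrange_basis X N i) (X j) = (if i = j then 1 else 0)"
proof -
  have "poly (lagrange_basis X N i) (X j) = (\<Prod>s\<in>{1..N} - {i}. (X j - X s) / (X i - X s))"
    by (simp add: lagrange_basis_def poly_prod diff_divide_distrib)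
  also have "\<dots> = (if i = j then 1 else 0)"
  proof (cases "i = j")
    case True
    have "X i \<noteq> X s" if "s \<in> {1..N} - {i}" for s
      using assms(1,2) that by (metis DiffE inj_onD singletonI)
    then show ?thesis using True by (simp add: prod.neutral)
  next
    case False
    have "(\<Prod>s\<in>{1..N} - {i}. (X j - X s) / (X i - X s)) = 0"
      by (rule prod_zero) (use False assms(3) in auto)
    then show ?thesis using False by simp
  qed
  finally show ?thesis .
qed

lemma degree_lagrange_basis_le:
  assumes "i \<in> {1..N}"
  shows "degree (lagrange_basis X N i) \<le> N - 1"
proof -
  have "degree (lagrange_basis X N i) \<le> sum (degree \<circ> (\<lambda>s. smult (1 / (X i - X s)) [:- X s, 1:])) ({1..N} - {i})"
    unfolding lagrange_basis_def by (rule degree_prod_sum_le) simp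
  also have "\<dots> \<le> (\<Sum>s\<in>{1..N} - {i}. 1)"
    by (rule sum_mono) (simp add: degree_smult_le)
  also have "\<dots> = N - 1"
    using assms by simp
  finally show ?thesis .
qed

lemma lagrange_interpolation:
  assumes "inj_on X {1..N}" "degree q < N"
  shows "q = (\<Sum>j\<in>{1..N}. smult (poly q (X j)) (lagrange_basis X N j))"
    (is "q = ?L")
proof (rule poly_eqI_degree[where A = "X ` {1..N}"])
  show "poly q x = poly ?L x" if "x \<in> X ` {1..N}" for x
  proof -
    from that obtain i where i: "i \<in> {1..N}" "x = X i" by auto
    have "poly ?L x = (\<Sum>j\<in>{1..N}. poly q (X j) * (if j = i then 1 else 0))"
      using i assms(1) by (simp add: poly_sum poly_lagrange_basis_node)
    also have "\<dots> = poly q x"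
      using i by (simp add: if_distrib[of "(*) _"] cong: if_cong)
    finally show ?thesis ..
  qed
  have "degree ?L \<le> N - 1"
    by (intro degree_sum_le order.trans[OF degree_smult_le degree_lagrange_basis_le]) auto
  moreover have "card (X ` {1..N}) = N"
    using assms(1) by (simp add: card_image)
  ultimately show "degree q < card (X ` {1..N})" "degree ?L < card (X ` {1..N})"
    using assms(2) by auto
qed

lemma poly_eq_0_if_integral_square_eq_0:
  fixes q :: "real poly"
  assumes "a < b" "integral {a..b} (\<lambda>x. poly q x * poly q x) = 0"
  shows "q = 0"
proof (rule ccontr)
  assume "q \<noteq> 0"
  have "(\<lambda>x. poly q x * poly q x) integrable_on cbox a b"
    by (intro integrable_continuous continuous_intros)
  then have "((\<lambda>x. poly q x * poly q x) has_integral 0) (cbox a b)"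
    using assms(2) by (simp add: has_integral_integral cbox_interval)
  then have "poly q x * poly q x = 0" if "x \<in> {a..b}" for x
    by (rule has_integral_0_cbox_imp_0[rotated 2]) (use that assms(1) in \<open>auto intro!: continuous_intros\<close>)
  then have "{a..b} \<subseteq> {x. poly q x = 0}"
    by auto
  with poly_roots_finite[OF \<open>q \<noteq> 0\<close>] show False
    using assms(1) by (meson finite_subset infinite_Icc)
qed

lemma poly_eq_0_if_orthogonal_lagrange_basis:
  fixes q :: "real poly"
  assumes "inj_on X {1..N}" "degree q < N" "a < b"
    and orth: "\<forall>j\<in>{1..N}. integral {a..b} (\<lambda>x. poly q x * poly (lagrange_basis X N j) x) = 0"
  shows "q = 0"
proof (rule poly_eq_0_if_integral_square_eq_0[OF \<open>a < b\<close>])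
  define L where "L = (\<Sum>j\<in>{1..N}. smult (poly q (X j)) (lagrange_basis X N j))"
  have "q = L"
    unfolding L_def by (rule lagrange_interpolation[OF assms(1,2)])
  then have "poly q x * poly q x = poly q x * poly L x" for x
    by (simp only:)
  then have "integral {a..b} (\<lambda>x. poly q x * poly q x)
      = integral {a..b} (\<lambda>x. \<Sum>j\<in>{1..N}. poly q (X j) * (poly q x * poly (lagrange_basis X N j) x))"
    by (simp add: L_def poly_sum sum_distrib_left mult_ac)
  also have "\<dots> = (\<Sum>j\<in>{1..N}. poly q (X j) * integral {a..b} (\<lambda>x. poly q x * poly (lagrange_basis X N j) x))"
    by (subst integral_sum) (auto intro!: integrable_continuous_interval continuous_intros)
  also have "\<dots> = 0"
    using orth by simp
  finally show "integral {a..b} (\<lambda>x. poly q x * poly q x) = 0" .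
qed

lemma poly_eq_if_orthogonal_lagrange_basis:
  fixes p r :: "real poly"
  assumes "inj_on X {1..N}" "degree p < N" "degree r < N" "a < b"
    and "\<forall>j\<in>{1..N}. integral {a..b} (\<lambda>x. (poly p x - poly r x) * poly (lagrange_basis X N j) x) = 0"
  shows "p = r"
proof -
  have "degree (p - r) < N"
    using assms(2,3) by (rule degree_diff_less)
  then have "p - r = 0"
    using assms(1,4,5) by (intro poly_eq_0_if_orthogonal_lagrange_basis) auto
  then show ?thesis by simp
qed

lemma mortar_offset_Suc_eq_sum: "mortar_offset s (Suc n) = (\<Sum>k\<in>{1..n}. s k)"
  unfolding mortar_offset_def by (simp add: atLeastLessThanSuc_atLeastAtMost)

lemma sum_integral_mortar_intervals:
  fixes f :: "real \<Rightarrow> real"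
  assumes "\<forall>k\<in>{1..n}. s k \<ge> 0" "f integrable_on {0 .. \<Sum>k\<in>{1..n}. s k}"
  shows "(\<Sum>k\<in>{1..n}. integral {mortar_offset s k .. mortar_offset s k + s k} f)
       = integral {0 .. \<Sum>k\<in>{1..n}. s k} f"
  using assms
proof (induction n)
  case 0
  then show ?case by simp
next
  case (Suc n)
  define S where "S = (\<Sum>k\<in>{1..n}. s k)"
  have S_nonneg: "S \<ge> 0" and s_nonneg: "s (Suc n) \<ge> 0"
    using Suc.prems(1) unfolding S_def by (auto intro: sum_nonneg)
  have sum_Suc: "(\<Sum>k\<in>{1..Suc n}. s k) = S + s (Suc n)"
    unfolding S_def by simp
  have "f integrable_on {0 .. S}"
    using s_nonneg sum_Suc by (intro integrable_on_subinterval[OF Suc.prems(2)]) auto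
  then have "(\<Sum>k\<in>{1..Suc n}. integral {mortar_offset s k .. mortar_offset s k + s k} f)
      = integral {0 .. S} f + integral {S .. S + s (Suc n)} f"
    using Suc.IH Suc.prems(1) by (simp add: S_def mortar_offset_Suc_eq_sum)
  also have "\<dots> = integral {0 .. \<Sum>k\<in>{1..Suc n}. s k} f"
    using S_nonneg s_nonneg Suc.prems(2) unfolding sum_Suc
    by (intro Henstock_Kurzweil_Integration.integral_combine) auto
  finally show ?case .
qed

theorem mainTheorem1:
  fixes N m :: nat and X s :: "nat \<Rightarrow> real"
    and phi phiStar :: "real poly" and phiXi :: "nat \<Rightarrow> real poly"
  assumes N_pos: "N \<ge> 1"
    and X_inj: "inj_on X {1..N}"
    and X_roots: "\<forall>i\<in>{1..N}. poly (legendre_poly N) (2 * X i - 1) = 0"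
    and m_pos: "m \<ge> 1"
    and s_pos: "\<forall>k\<in>{1..m}. s k > 0"
    and s_sum: "(\<Sum>k\<in>{1..m}. s k) = 1"
    and phi_deg: "degree phi \<le> N - 1"
    and phiXi_deg: "\<forall>k\<in>{1..m}. degree (phiXi k) \<le> N - 1"
    and phiXi_def: "\<forall>k\<in>{1..m}. \<forall>j\<in>{1..N}.
          integral {0..1} (\<lambda>z. (poly (phiXi k) z - poly phi (mortar_offset s k + s k * z))
                                  * poly (lagrange_basis X N j) z) = 0"
    and phiStar_deg: "degree phiStar \<le> N - 1"
    and phiStar_def: "\<forall>j\<in>{1..N}.
          (\<Sum>k\<in>{1..m}. integral {mortar_offset s k .. mortar_offset s k + s k}
             (\<lambda>\<xi>. (poly phiStar \<xi> - poly (phiXi k) ((\<xi> - mortar_offset s k) / s k))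
                   * poly (lagrange_basis X N j) \<xi>)) = 0"
  shows "phiStar = phi"
proof -
  let ?o = "mortar_offset s" and ?h = "lagrange_basis X N"
  have deg_lt: "degree p < N" if "degree p \<le> N - 1" for p :: "real poly"
    using that N_pos by linarith
  have phiXi_eq: "poly (phiXi k) ((x - ?o k) / s k) = poly phi x" if k: "k \<in> {1..m}" for k x
  proof -
    have "phiXi k = pcompose phi [:?o k, s k:]"
      using phiXi_deg phiXi_def k phi_deg
      by (intro poly_eq_if_orthogonal_lagrange_basis[OF X_inj, of _ _ 0 1] deg_lt)
         (auto simp: degree_pcompose poly_pcompose algebra_simps)
    moreover have "s k > 0"
      using s_pos k by blast
    ultimately show ?thesis by (simp add: poly_pcompose)
  qed
  have "integral {0..1} (\<lambda>x. (poly phiStar x - poly phi x) * poly (?h j) x) = 0"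
    if j: "j \<in> {1..N}" for j
  proof -
    have "0 = (\<Sum>k\<in>{1..m}. integral {?o k .. ?o k + s k}
        (\<lambda>\<xi>. (poly phiStar \<xi> - poly (phiXi k) ((\<xi> - ?o k) / s k)) * poly (?h j) \<xi>))"
      using phiStar_def j by simp
    also have "\<dots> = (\<Sum>k\<in>{1..m}. integral {?o k .. ?o k + s k}
        (\<lambda>x. (poly phiStar x - poly phi x) * poly (?h j) x))"
      by (intro sum.cong refl integral_cong) (simp add: phiXi_eq)
    also have "\<dots> = integral {0 .. \<Sum>k\<in>{1..m}. s k} (\<lambda>x. (poly phiStar x - poly phi x) * poly (?h j) x)"
      using s_pos
      by (intro sum_integral_mortar_intervals)
         (auto intro: less_imp_le intro!: integrable_continuous_interval continuous_intros)
    finally show ?thesis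
      using s_sum by simp
  qed
  then show ?thesis
    using phi_deg phiStar_deg by (intro poly_eq_if_orthogonal_lagrange_basis[OF X_inj, of _ _ 0 1] deg_lt) auto
qed

end
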